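(* Let $L\in\mathbb N$ satisfy $\operatorname{rank}\mathcal O_L(\Sigma_s)=n$ and let $K=[A_L,\dots,A_1,B_L,\dots,B_1]\in\mathbb R^{m\times L(m+r)}$ with $A_i\in\mathbb R^{m\times m}$, $B_i\in\mathbb R^{m\times r}$. Consider the dynamic output feedback controller $\mathbf K_s$: $\xi(t+1)=\Xi\xi(t)+\Lambda y(t)$, $u(t)=\Omega\xi(t)$, $\xi\in\mathbb R^{Lm}$, $t\ge0$, where $\Xi\in\mathbb R^{Lm\times Lm}$ has $I_m$ in blocks $(k+1,k)$, $k=1,\dots,L-1$, last block column $[A_L;A_{L-1};\dots;A_1]$, and zeros elsewhere; $\Lambda=[B_L;B_{L-1};\dots;B_1]$; $\Omega=[0,\dots,0,I_m]$; and $\xi(0)=\mathcal O_L(\mathbf K_s)^{-1}[I,\,-\mathcal H_L(\mathbf K_s)]\,v(L)$, where $\mathcal O_L(\mathbf K_s)=[\Omega^\top,(\Omega\Xi)^\top,\dots,(\Omega\Xi^{L-1})^\top]^\top$ and $\mathcal H_L(\mathbf K_s)$ is the block lower-triangular Toeplitz matrix with $(i,j)$ block $G_{i-j}$, $G_0=0$, $G_k=\Omega\Xi^{k-1}\Lambda$. Then the signals $u$ and $y$ of the closed loop of the IOH system $v(t+1)=\Theta v(t)+\Pi u(t)$, $y(t)=C\Gamma v(t)$ with the IOH feedback $u(t)=Kv(t)$, $t\ge L$, are identical to those of the feedback interconnection of $\Sigma_s$ and $\mathbf K_s$.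
   Context: System $\Sigma_s$: $x(t+1)=Ax(t)+Bu(t)$, $y(t)=Cx(t)$, $t\ge0$, $x\in\mathbb R^n,u\in\mathbb R^m,y\in\mathbb R^r$; standing assumptions: $(A,B,C)$ minimal and $A$ Schur. $\mathcal R_L(\Sigma_s)=[A^{L-1}B,\dots,B]$, $\mathcal O_L(\Sigma_s)=[C^\top,\dots,(CA^{L-1})^\top]^\top$, $\mathcal H_L(\Sigma_s)$ the $Lr\times Lm$ block lower-triangular Toeplitz matrix with $(i,j)$ block $H_{i-j}$, $H_0=0$, $H_k=CA^{k-1}B$. IOH: $v(t)=[u(t-L)^\top,\dots,u(t-1)^\top,y(t-L)^\top,\dots,y(t-1)^\top]^\top\in\mathbb R^{L(m+r)}$, $t\ge L$; $v(L)$ is the IOH at time $L$ (common to both loops). $\Gamma=[\mathcal R_L-A^L\mathcal O_L^\dagger\mathcal H_L,\ A^L\mathcal O_L^\dagger]$; $\Theta=\mathrm{diag}(S_m,S_r)+EC\Gamma$, with $S_k$ the $Lk\times Lk$ block matrix having $I_k$ in blocks $(i,i+1)$, $i<L$, zeros elsewhere, $E$ having $I_r$ in its last $r$ rows, zeros elsewhere; $\Pi\in\mathbb R^{L(m+r)\times m}$ has $I_m$ in rows $(L-1)m+1,\dots,Lm$, zeros elsewhere. *)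

theory Defs
  imports "Jordan_Normal_Form.Spectral_Radius" "Jordan_Normal_Form.DL_Rank"
    "Jordan_Normal_Form.Gauss_Jordan_Elimination"
begin

text \<open>Observability matrix O_L = [C; CA; ...; C A^(L-1)], of size (L r) x n,
  where r = dim_row C and n = dim_col C.\<close>
definition obs_mat :: "nat \<Rightarrow> real mat \<Rightarrow> real mat \<Rightarrow> real mat" where
  "obs_mat L C A = mat (L * dim_row C) (dim_col C)
     (\<lambda>(i, j). (C * A ^\<^sub>m (i div dim_row C)) $$ (i mod dim_row C, j))"

text \<open>Reachability matrix R_L = [A^(L-1) B, ..., A B, B], of size n x (L m).\<close>
definition reach_mat :: "nat \<Rightarrow> real mat \<Rightarrow> real mat \<Rightarrow> real mat" where
  "reach_mat L A B = mat (dim_row B) (L * dim_col B)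
     (\<lambda>(i, j). (A ^\<^sub>m (L - 1 - j div dim_col B) * B) $$ (i, j mod dim_col B))"

text \<open>Block lower-triangular Toeplitz matrix H_L with (i,j) block H_(i-j),
  H_0 = 0, H_k = C A^(k-1) B; size (L r) x (L m).\<close>
definition toep_mat :: "nat \<Rightarrow> real mat \<Rightarrow> real mat \<Rightarrow> real mat \<Rightarrow> real mat" where
  "toep_mat L A B C = mat (L * dim_row C) (L * dim_col B)
     (\<lambda>(i, j). if j div dim_col B < i div dim_row C
               then (C * A ^\<^sub>m (i div dim_row C - j div dim_col B - 1) * B)
                      $$ (i mod dim_row C, j mod dim_col B)
               else 0)"

definition pinv :: "real mat \<Rightarrow> real mat" where
  "pinv M = (THE X. X \<in> carrier_mat (dim_col M) (dim_row M) \<and>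
       M * X * M = M \<and> X * M * X = X \<and>
       (M * X)\<^sup>T = M * X \<and> (X * M)\<^sup>T = X * M)"

definition hcat :: "real mat \<Rightarrow> real mat \<Rightarrow> real mat" where
  "hcat M1 M2 = mat (dim_row M1) (dim_col M1 + dim_col M2)
     (\<lambda>(i, j). if j < dim_col M1 then M1 $$ (i, j) else M2 $$ (i, j - dim_col M1))"

definition rank_mat :: "real mat \<Rightarrow> nat" where
  "rank_mat M = vec_space.rank (dim_row M) M"

definition controllable :: "real mat \<Rightarrow> real mat \<Rightarrow> bool" where
  "controllable A B \<longleftrightarrow> rank_mat (reach_mat (dim_row A) A B) = dim_row A"

definition observable :: "real mat \<Rightarrow> real mat \<Rightarrow> bool" where
  "observable C A \<longleftrightarrow> rank_mat (obs_mat (dim_row A) C A) = dim_row A"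

definition minimal_sys :: "real mat \<Rightarrow> real mat \<Rightarrow> real mat \<Rightarrow> bool" where
  "minimal_sys A B C \<longleftrightarrow> controllable A B \<and> observable C A"

definition schur :: "real mat \<Rightarrow> bool" where
  "schur A \<longleftrightarrow> (\<forall>z \<in> spectrum (map_mat complex_of_real A). cmod z < 1)"

definition Gamma_mat :: "nat \<Rightarrow> real mat \<Rightarrow> real mat \<Rightarrow> real mat \<Rightarrow> real mat" where
  "Gamma_mat L A B C =
     hcat (reach_mat L A B - A ^\<^sub>m L * pinv (obs_mat L C A) * toep_mat L A B C)
          (A ^\<^sub>m L * pinv (obs_mat L C A))"

definition shift_mat :: "nat \<Rightarrow> nat \<Rightarrow> real mat" where
  "shift_mat L k = mat (L * k) (L * k) (\<lambda>(a, b). if b = a + k then 1 else 0)"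

definition E_mat :: "nat \<Rightarrow> nat \<Rightarrow> nat \<Rightarrow> real mat" where
  "E_mat L m r = mat (L * (m + r)) r (\<lambda>(a, b). if a = L * (m + r) - r + b then 1 else 0)"

definition Theta_mat :: "nat \<Rightarrow> real mat \<Rightarrow> real mat \<Rightarrow> real mat \<Rightarrow> real mat" where
  "Theta_mat L A B C =
     four_block_mat (shift_mat L (dim_col B)) (0\<^sub>m (L * dim_col B) (L * dim_row C))
                    (0\<^sub>m (L * dim_row C) (L * dim_col B)) (shift_mat L (dim_row C))
     + E_mat L (dim_col B) (dim_row C) * C * Gamma_mat L A B C"

definition Pi_mat :: "nat \<Rightarrow> nat \<Rightarrow> nat \<Rightarrow> real mat" where
  "Pi_mat L m r = mat (L * (m + r)) m (\<lambda>(a, b). if a = (L - 1) * m + b then 1 else 0)"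

text \<open>Input-output history v(t) = [u(t-L);...;u(t-1); y(t-L);...;y(t-1)] (for t \<ge> L).\<close>
definition ioh :: "nat \<Rightarrow> nat \<Rightarrow> nat \<Rightarrow> (nat \<Rightarrow> real vec) \<Rightarrow> (nat \<Rightarrow> real vec) \<Rightarrow> nat \<Rightarrow> real vec" where
  "ioh L m r u y t = vec (L * (m + r))
     (\<lambda>a. if a < L * m then u (t - L + a div m) $ (a mod m)
          else y (t - L + (a - L * m) div r) $ ((a - L * m) mod r))"

definition K_A :: "nat \<Rightarrow> nat \<Rightarrow> real mat \<Rightarrow> nat \<Rightarrow> real mat" where
  "K_A L m K i = mat m m (\<lambda>(a, b). K $$ (a, (L - i) * m + b))"

definition K_B :: "nat \<Rightarrow> nat \<Rightarrow> nat \<Rightarrow> real mat \<Rightarrow> nat \<Rightarrow> real mat" where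
  "K_B L m r K i = mat m r (\<lambda>(a, b). K $$ (a, L * m + (L - i) * r + b))"

definition Xi_mat :: "nat \<Rightarrow> nat \<Rightarrow> real mat \<Rightarrow> real mat" where
  "Xi_mat L m K = mat (L * m) (L * m)
     (\<lambda>(a, b). if (L - 1) * m \<le> b then K_A L m K (L - a div m) $$ (a mod m, b - (L - 1) * m)
              else if a = b + m then 1 else 0)"

definition Lambda_mat :: "nat \<Rightarrow> nat \<Rightarrow> nat \<Rightarrow> real mat \<Rightarrow> real mat" where
  "Lambda_mat L m r K = mat (L * m) r (\<lambda>(a, b). K_B L m r K (L - a div m) $$ (a mod m, b))"

definition Omega_mat :: "nat \<Rightarrow> nat \<Rightarrow> real mat" where
  "Omega_mat L m = mat m (L * m) (\<lambda>(a, b). if b = (L - 1) * m + a then 1 else 0)"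

end

theory Submission
  imports Defs
begin

(*
  For t >= L the IOH v(t) determines the state. Over the window [t - L, t) the stacked outputs are
  O_L x(t - L) + H_L u and the final state is x(t) = A^L x(t - L) + R_L u, where u stacks the inputs;
  since O_L has full column rank, O_L^+ O_L = I, and eliminating x(t - L) gives Gamma v(t) = x(t).
  Hence C Gamma v(t) = y(t), and Theta v(t) + Pi u(t) is exactly the shifted window v(t + 1).

  The controller K_s is the observer form of the ARX law u(t) = K v(t): its state is a delay line
  whose block j accumulates A_(L-i) u + B_(L-i) y over the last j + 1 steps, so its output, the
  last block, equals K v(t) as soon as t >= L. Its initial state is chosen such that, driven by the
  recorded outputs, it reproduces the recorded inputs on [0, L); therefore the interconnection
  retraces the recorded data and reaches the IOH v(L). From then on both closed loops obey the same
  recursion v(t + 1) = Theta v(t) + Pi K v(t).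
*)

lemma block_index_less: "l < L \<Longrightarrow> e < k \<Longrightarrow> l * k + e < L * (k::nat)"
proof -
  assume "l < L" "e < k"
  then have "l * k + e < Suc l * k" by simp
  also have "\<dots> \<le> L * k" using \<open>l < L\<close> by (intro mult_le_mono1) simp
  finally show ?thesis .
qed

lemma block_indexE:
  fixes a L k :: nat
  assumes "a < L * k"
  obtains l e where "l < L" "e < k" "a = l * k + e"
proof
  show "a div k < L" using assms by (simp add: less_mult_imp_div_less)
  show "a mod k < k" using assms by (cases k) auto
qed simp

lemma sum_blocks: "(\<Sum>c < L * k. f c) = (\<Sum>l < L. \<Sum>e < k. f (l * k + e) :: 'a :: comm_monoid_add)"
  for L k :: nat
proof -
  have "(\<Sum>e < k. f (l * k + e)) = sum f {l * k..<l * k + k}" for l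
    using sum.shift_bounds_nat_ivl[of f 0 "l * k" k] by (simp add: atLeast0LessThan add.commute)
  then show ?thesis using sum.nat_group[of f k L] by simp
qed

lemma sum_lessThan_add: "(\<Sum>c < a + b. f c) = (\<Sum>c < a. f c) + (\<Sum>c < b. f (a + c) :: 'a :: comm_monoid_add)"
  for a b :: nat
  by (induction b) (simp_all add: add.assoc)

lemma index_mult_mat_vec_sum:
  "A \<in> carrier_mat p q \<Longrightarrow> v \<in> carrier_vec q \<Longrightarrow> i < p
    \<Longrightarrow> (A *\<^sub>v v) $ i = (\<Sum>c < q. A $$ (i, c) * v $ c)"
  by (auto simp: scalar_prod_def atLeast0LessThan intro!: sum.cong)

lemma pow_mat_Suc_left: "F \<in> carrier_mat p p \<Longrightarrow> F ^\<^sub>m Suc k = F * F ^\<^sub>m k"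
proof (induction k)
  case (Suc k)
  then have "F ^\<^sub>m Suc (Suc k) = (F * F ^\<^sub>m k) * F" by simp
  also have "\<dots> = F * (F ^\<^sub>m k * F)" using Suc.prems by (simp add: assoc_mult_mat[of _ p p _ p _ p])
  finally show ?case by simp
qed simp

lemma hcat_mult_append:
  assumes "M1 \<in> carrier_mat p c1" "M2 \<in> carrier_mat p c2" "w1 \<in> carrier_vec c1" "w2 \<in> carrier_vec c2"
  shows "hcat M1 M2 *\<^sub>v (w1 @\<^sub>v w2) = M1 *\<^sub>v w1 + M2 *\<^sub>v w2"
proof (rule eq_vecI)
  have H: "hcat M1 M2 \<in> carrier_mat p (c1 + c2)" using assms by (auto simp: hcat_def)
  fix i assume "i < dim_vec (M1 *\<^sub>v w1 + M2 *\<^sub>v w2)"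
  then have i: "i < p" using assms by auto
  have "(hcat M1 M2 *\<^sub>v (w1 @\<^sub>v w2)) $ i = (\<Sum>c < c1 + c2. hcat M1 M2 $$ (i, c) * (w1 @\<^sub>v w2) $ c)"
    using H assms i by (intro index_mult_mat_vec_sum) auto
  also have "\<dots> = (\<Sum>c < c1. M1 $$ (i, c) * w1 $ c) + (\<Sum>c < c2. M2 $$ (i, c) * w2 $ c)"
    using assms i by (simp add: sum_lessThan_add hcat_def)
  also have "\<dots> = (M1 *\<^sub>v w1 + M2 *\<^sub>v w2) $ i"
    using assms i by (simp del: index_mult_mat_vec add: index_mult_mat_vec_sum)
  finally show "(hcat M1 M2 *\<^sub>v (w1 @\<^sub>v w2)) $ i = (M1 *\<^sub>v w1 + M2 *\<^sub>v w2) $ i" .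
qed (use assms in \<open>auto simp: hcat_def\<close>)

lemma mult_vec_selection_mat:
  assumes w: "w \<in> carrier_vec k" and a: "a < p"
  shows "(mat p k (\<lambda>(i, j). if i = c + j then 1 else 0) *\<^sub>v w) $ a
           = (if c \<le> a \<and> a < c + k then w $ (a - c) else (0 :: 'a :: comm_semiring_1))"
proof -
  have "(mat p k (\<lambda>(i, j). if i = c + j then 1 else 0) *\<^sub>v w) $ a
          = (\<Sum>j < k. if j = a - c \<and> c \<le> a then w $ j else 0)"
    using w a by (simp add: index_mult_mat_vec_sum[of _ p k] del: index_mult_mat_vec)
      (intro sum.cong; auto)
  also have "\<dots> = (if c \<le> a \<and> a < c + k then w $ (a - c) else 0)"
    by auto
  finally show ?thesis .
qed

lemma mult_vec_shift_selection_mat: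
  assumes w: "w \<in> carrier_vec q" and a: "a < p"
  shows "(mat p q (\<lambda>(i, j). if j = i + c then 1 else 0) *\<^sub>v w) $ a
           = (if a + c < q then w $ (a + c) else (0 :: 'a :: comm_semiring_1))"
proof -
  have "(mat p q (\<lambda>(i, j). if j = i + c then 1 else 0) *\<^sub>v w) $ a
          = (\<Sum>j < q. (if j = a + c then 1 else 0) * w $ j)"
    using w a by (simp add: index_mult_mat_vec_sum[of _ p q] del: index_mult_mat_vec)
  also have "\<dots> = (if a + c < q then w $ (a + c) else 0)"
    by (simp add: if_distrib[of "\<lambda>x. x * _"] cong: if_cong)
  finally show ?thesis .
qed

definition stack :: "nat \<Rightarrow> nat \<Rightarrow> (nat \<Rightarrow> 'a vec) \<Rightarrow> 'a vec" where
  "stack L k f = vec (L * k) (\<lambda>a. f (a div k) $ (a mod k))"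

lemma stack_carrier [simp]: "stack L k f \<in> carrier_vec (L * k)"
  by (simp add: stack_def)

lemma dim_stack [simp]: "dim_vec (stack L k f) = L * k"
  by (simp add: stack_def)

lemma stack_index [simp]: "l < L \<Longrightarrow> e < k \<Longrightarrow> stack L k f $ (l * k + e) = f l $ e"
  by (simp add: stack_def block_index_less)

lemma stack_cong: "(\<And>l. l < L \<Longrightarrow> f l = g l) \<Longrightarrow> stack L k f = stack L k g"
  by (auto simp: stack_def less_mult_imp_div_less)

lemma stack_add:
  assumes "\<And>l. l < L \<Longrightarrow> g l \<in> carrier_vec k"
  shows "stack L k f + stack L k g = stack L k (\<lambda>l. f l + g l)"
proof (rule eq_vecI)
  fix a assume "a < dim_vec (stack L k (\<lambda>l. f l + g l))"
  then obtain l e where "l < L" "e < k" "a = l * k + e" by (auto elim: block_indexE)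
  then show "(stack L k f + stack L k g) $ a = stack L k (\<lambda>l. f l + g l) $ a"
    using assms[of l] block_index_less by simp
qed simp

lemma stack_eqD:
  assumes "stack L k f = stack L k g" "l < L" "f l \<in> carrier_vec k" "g l \<in> carrier_vec k"
  shows "f l = g l"
proof (rule eq_vecI)
  fix e assume "e < dim_vec (g l)"
  then show "f l $ e = g l $ e"
    using assms stack_index[of l L e k] by (metis carrier_vecD)
qed (use assms in simp)

lemma stack_zero: "stack L k (\<lambda>_. 0\<^sub>v k) = 0\<^sub>v (L * k)"
  by (rule eq_vecI) (auto elim!: block_indexE)

lemma stack_window_shift:
  fixes f :: "nat \<Rightarrow> 'a :: monoid_add vec"
  assumes f: "\<And>s. f s \<in> carrier_vec k" and t: "L \<le> t"
  shows "stack L k (\<lambda>l. if Suc l < L then f (t - L + Suc l) else 0\<^sub>v k)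
           + stack L k (\<lambda>l. if l = L - 1 then f t else 0\<^sub>v k) = stack L k (\<lambda>l. f (Suc t - L + l))"
proof -
  have "stack L k (\<lambda>l. if Suc l < L then f (t - L + Suc l) else 0\<^sub>v k)
           + stack L k (\<lambda>l. if l = L - 1 then f t else 0\<^sub>v k)
      = stack L k (\<lambda>l. (if Suc l < L then f (t - L + Suc l) else 0\<^sub>v k)
                          + (if l = L - 1 then f t else 0\<^sub>v k))"
    using f by (intro stack_add) auto
  also have "\<dots> = stack L k (\<lambda>l. f (Suc t - L + l))"
  proof (rule stack_cong)
    fix l assume l: "l < L"
    show "(if Suc l < L then f (t - L + Suc l) else 0\<^sub>v k) + (if l = L - 1 then f t else 0\<^sub>v k) = f (Suc t - L + l)"
    proof (cases "Suc l < L")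
      case True
      then have not_last: "l \<noteq> L - 1" and shift: "t - L + Suc l = Suc t - L + l" using t by auto
      show ?thesis by (simp only: if_P[OF True] if_not_P[OF not_last] right_zero_vec[OF f] shift)
    next
      case False
      then have last: "l = L - 1" and shift: "Suc t - L + l = t" using l t by auto
      show ?thesis by (simp only: if_not_P[OF False] if_P[OF last] left_zero_vec[OF f] shift)
    qed
  qed
  finally show ?thesis .
qed

lemma ioh_eq_stack:
  "ioh L m r u y t = stack L m (\<lambda>l. u (t - L + l)) @\<^sub>v stack L r (\<lambda>l. y (t - L + l))"
  by (rule eq_vecI) (auto simp: ioh_def stack_def algebra_simps)

lemma shift_mat_mult_stack:
  "shift_mat L k *\<^sub>v stack L k f = stack L k (\<lambda>l. if Suc l < L then f (Suc l) else 0\<^sub>v k)"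
proof (rule eq_vecI)
  fix a assume "a < dim_vec (stack L k (\<lambda>l. if Suc l < L then f (Suc l) else 0\<^sub>v k))"
  then obtain l e where l: "l < L" and e: "e < k" and a: "a = l * k + e" by (auto elim: block_indexE)
  have "(shift_mat L k *\<^sub>v stack L k f) $ a = (if a + k < L * k then stack L k f $ (a + k) else 0)"
    using mult_vec_shift_selection_mat[of "stack L k f" "L * k" a "L * k" k] l e a block_index_less
    by (simp add: shift_mat_def)
  also have "\<dots> = (if Suc l < L then f (Suc l) $ e else 0)"
  proof (cases "Suc l < L")
    case True
    then show ?thesis
      using a e stack_index[OF True e, of f] block_index_less[OF True e]
      by (simp add: add.commute add.left_commute)
  next
    case False
    then have "L * k \<le> Suc l * k" by (intro mult_le_mono1) simp
    then show ?thesis using False a by simp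
  qed
  finally show "(shift_mat L k *\<^sub>v stack L k f) $ a
      = stack L k (\<lambda>l. if Suc l < L then f (Suc l) else 0\<^sub>v k) $ a"
    using l e a by simp
qed (simp add: shift_mat_def)

lemma last_block_le_iff:
  fixes l L e k :: nat
  assumes "l < L" "e < k"
  shows "(L - 1) * k \<le> l * k + e \<longleftrightarrow> l = L - 1"
proof
  assume le: "(L - 1) * k \<le> l * k + e"
  show "l = L - 1"
  proof (rule ccontr)
    assume "l \<noteq> L - 1"
    then have "l < L - 1" using assms by arith
    then show False using block_index_less[OF _ assms(2)] le by (meson not_le)
  qed
qed simp

lemma E_mat_mult_vec:
  assumes L: "0 < L" and w: "w \<in> carrier_vec r"
  shows "E_mat L m r *\<^sub>v w = 0\<^sub>v (L * m) @\<^sub>v stack L r (\<lambda>l. if l = L - 1 then w else 0\<^sub>v r)"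
proof (rule eq_vecI)
  have N: "L * (m + r) - r = L * m + (L - 1) * r" using L by (cases L) (auto simp: algebra_simps)
  fix a assume "a < dim_vec (0\<^sub>v (L * m) @\<^sub>v stack L r (\<lambda>l. if l = L - 1 then w else 0\<^sub>v r))"
  then have a: "a < L * (m + r)" by (simp add: algebra_simps)
  have Ea: "(E_mat L m r *\<^sub>v w) $ a = (if L * m + (L - 1) * r \<le> a then w $ (a - (L * m + (L - 1) * r)) else 0)"
    using mult_vec_selection_mat[OF w a, of "L * (m + r) - r"] a N by (simp add: E_mat_def)
  show "(E_mat L m r *\<^sub>v w) $ a
      = (0\<^sub>v (L * m) @\<^sub>v stack L r (\<lambda>l. if l = L - 1 then w else 0\<^sub>v r)) $ a"
  proof (cases "a < L * m")
    case True
    then show ?thesis using Ea by simp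
  next
    case False
    then have "a - L * m < L * r" using a by (simp add: algebra_simps)
    then obtain l e where l: "l < L" and e: "e < r" and le: "a - L * m = l * r + e"
      by (elim block_indexE)
    have a_eq: "a = L * m + (l * r + e)" using le False by simp
    have "(0\<^sub>v (L * m) @\<^sub>v stack L r (\<lambda>l. if l = L - 1 then w else 0\<^sub>v r)) $ a
        = (if l = L - 1 then w else 0\<^sub>v r) $ e"
      using a_eq l e block_index_less[OF l e] by simp
    then show ?thesis using Ea w e a_eq last_block_le_iff[OF l e] by auto
  qed
qed (simp add: E_mat_def algebra_simps)

lemma Pi_mat_mult_vec:
  assumes L: "0 < L" and w: "w \<in> carrier_vec m"
  shows "Pi_mat L m r *\<^sub>v w = stack L m (\<lambda>l. if l = L - 1 then w else 0\<^sub>v m) @\<^sub>v 0\<^sub>v (L * r)"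
proof (rule eq_vecI)
  fix a assume "a < dim_vec (stack L m (\<lambda>l. if l = L - 1 then w else 0\<^sub>v m) @\<^sub>v 0\<^sub>v (L * r))"
  then have a: "a < L * (m + r)" by (simp add: algebra_simps)
  have Lm: "(L - 1) * m + m = L * m" using L by (cases L) auto
  have Pa: "(Pi_mat L m r *\<^sub>v w) $ a = (if (L - 1) * m \<le> a \<and> a < L * m then w $ (a - (L - 1) * m) else 0)"
    using mult_vec_selection_mat[OF w a, of "(L - 1) * m"] Lm by (simp add: Pi_mat_def)
  show "(Pi_mat L m r *\<^sub>v w) $ a
      = (stack L m (\<lambda>l. if l = L - 1 then w else 0\<^sub>v m) @\<^sub>v 0\<^sub>v (L * r)) $ a"
  proof (cases "a < L * m")
    case True
    then obtain l e where l: "l < L" and e: "e < m" and le: "a = l * m + e" by (auto elim: block_indexE)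
    then show ?thesis using Pa True w last_block_le_iff[OF l e] by auto
  next
    case False
    then show ?thesis using Pa a by (simp add: algebra_simps)
  qed
qed (simp add: Pi_mat_def algebra_simps)

section \<open>Trajectories of linear systems\<close>

lemma dim_toep_mat [simp]:
  "dim_row (toep_mat L A B C) = L * dim_row C" "dim_col (toep_mat L A B C) = L * dim_col B"
  by (simp_all add: toep_mat_def)

lemma dim_reach_mat [simp]:
  "dim_row (reach_mat L A B) = dim_row B" "dim_col (reach_mat L A B) = L * dim_col B"
  by (simp_all add: reach_mat_def)

lemma obs_mat_carrier: "C \<in> carrier_mat r n \<Longrightarrow> obs_mat L C A \<in> carrier_mat (L * r) n"
  by (simp add: obs_mat_def)

lemma toep_mat_carrier:
  "B \<in> carrier_mat n m \<Longrightarrow> C \<in> carrier_mat r n \<Longrightarrow> toep_mat L A B C \<in> carrier_mat (L * r) (L * m)"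
  by (simp add: toep_mat_def)

lemma reach_mat_carrier: "B \<in> carrier_mat n m \<Longrightarrow> reach_mat L A B \<in> carrier_mat n (L * m)"
  by (simp add: reach_mat_def)

lemma obs_mat_mult_vec:
  assumes A: "A \<in> carrier_mat n n" and C: "C \<in> carrier_mat r n" and x: "x \<in> carrier_vec n"
  shows "obs_mat L C A *\<^sub>v x = stack L r (\<lambda>l. C * A ^\<^sub>m l *\<^sub>v x)"
proof (rule eq_vecI)
  fix i assume "i < dim_vec (stack L r (\<lambda>l. C * A ^\<^sub>m l *\<^sub>v x))"
  then obtain l e where le: "l < L" "e < r" "i = l * r + e" by (auto elim: block_indexE)
  have "row (obs_mat L C A) i = row (C * A ^\<^sub>m l) e"
    using le A C block_index_less[OF le(1,2)] by (auto simp: obs_mat_def row_def)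
  then show "(obs_mat L C A *\<^sub>v x) $ i = stack L r (\<lambda>l. C * A ^\<^sub>m l *\<^sub>v x) $ i"
    using le A C block_index_less[OF le(1,2)] by (simp add: obs_mat_def)
qed (use C in \<open>simp add: obs_mat_def\<close>)

lemma toep_mat_mult_stack:
  assumes A: "A \<in> carrier_mat n n" and B: "B \<in> carrier_mat n m" and C: "C \<in> carrier_mat r n"
    and w: "\<And>j. j < L \<Longrightarrow> w j \<in> carrier_vec m" and l: "l < L" and e: "e < r"
  shows "(toep_mat L A B C *\<^sub>v stack L m w) $ (l * r + e)
           = (\<Sum>j < l. (C * A ^\<^sub>m (l - 1 - j) * B *\<^sub>v w j) $ e)"
proof -
  let ?T = "toep_mat L A B C" and ?H = "\<lambda>j. C * A ^\<^sub>m (l - 1 - j) * B"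
  have le: "l * r + e < L * r" using l e by (rule block_index_less)
  have "(?T *\<^sub>v stack L m w) $ (l * r + e) = (\<Sum>j < L. \<Sum>f < m. ?T $$ (l * r + e, j * m + f) * w j $ f)"
    using le by (simp add: index_mult_mat_vec_sum[OF toep_mat_carrier[OF B C]] sum_blocks block_index_less)
  also have "\<dots> = (\<Sum>j < L. if j < l then (?H j *\<^sub>v w j) $ e else 0)"
  proof (rule sum.cong[OF refl])
    fix j assume "j \<in> {..<L}"
    then have j: "j < L" by simp
    have "(\<Sum>f < m. ?T $$ (l * r + e, j * m + f) * w j $ f)
            = (if j < l then \<Sum>f < m. ?H j $$ (e, f) * w j $ f else 0)"
      using le e B C block_index_less[OF j] by (auto simp: toep_mat_def)
    also have "\<dots> = (if j < l then (?H j *\<^sub>v w j) $ e else 0)"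
    proof -
      have "?H j \<in> carrier_mat r m" using A B C by (meson mult_carrier_mat pow_carrier_mat)
      then show ?thesis by (simp only: index_mult_mat_vec_sum[OF _ w[OF j] e])
    qed
    finally show "(\<Sum>f < m. ?T $$ (l * r + e, j * m + f) * w j $ f) = \<dots>" .
  qed
  also have "\<dots> = (\<Sum>j < l. (?H j *\<^sub>v w j) $ e)"
  proof -
    have "{..<L} \<inter> {j. j < l} = {..<l}" using l by auto
    then show ?thesis by (simp add: sum.If_cases)
  qed
  finally show ?thesis .
qed

lemma reach_mat_mult_stack:
  assumes A: "A \<in> carrier_mat n n" and B: "B \<in> carrier_mat n m"
    and w: "\<And>j. j < L \<Longrightarrow> w j \<in> carrier_vec m" and i: "i < n"
  shows "(reach_mat L A B *\<^sub>v stack L m w) $ i = (\<Sum>j < L. (A ^\<^sub>m (L - 1 - j) * B *\<^sub>v w j) $ i)"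
proof -
  have "(reach_mat L A B *\<^sub>v stack L m w) $ i
          = (\<Sum>j < L. \<Sum>f < m. reach_mat L A B $$ (i, j * m + f) * w j $ f)"
    using i by (simp add: index_mult_mat_vec_sum[OF reach_mat_carrier[OF B]] sum_blocks block_index_less)
  also have "\<dots> = (\<Sum>j < L. (A ^\<^sub>m (L - 1 - j) * B *\<^sub>v w j) $ i)"
  proof (rule sum.cong[OF refl])
    fix j assume "j \<in> {..<L}"
    then have j: "j < L" by simp
    have "(\<Sum>f < m. reach_mat L A B $$ (i, j * m + f) * w j $ f)
            = (\<Sum>f < m. (A ^\<^sub>m (L - 1 - j) * B) $$ (i, f) * w j $ f)"
      using B i block_index_less[OF j] by (intro sum.cong) (auto simp: reach_mat_def)
    also have "\<dots> = (A ^\<^sub>m (L - 1 - j) * B *\<^sub>v w j) $ i"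
    proof -
      have "A ^\<^sub>m (L - 1 - j) * B \<in> carrier_mat n m" using A B by (meson mult_carrier_mat pow_carrier_mat)
      then show ?thesis by (simp only: index_mult_mat_vec_sum[OF _ w[OF j] i])
    qed
    finally show "(\<Sum>f < m. reach_mat L A B $$ (i, j * m + f) * w j $ f) = \<dots>" .
  qed
  finally show ?thesis .
qed

lemma trajectory_carrier:
  assumes F: "F \<in> carrier_mat p p" and G: "G \<in> carrier_mat p q" and z0: "z 0 \<in> carrier_vec p"
    and w: "\<And>s. s < k \<Longrightarrow> w s \<in> carrier_vec q"
    and dyn: "\<And>s. s < k \<Longrightarrow> z (Suc s) = F *\<^sub>v z s + G *\<^sub>v w s"
  shows "z k \<in> carrier_vec p"
  using w dyn by (induction k) (use F G z0 in auto)

lemma trajectory_mult_index: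
  assumes F: "F \<in> carrier_mat p p" and G: "G \<in> carrier_mat p q" and z0: "z 0 \<in> carrier_vec p"
    and w: "\<And>s. s < k \<Longrightarrow> w s \<in> carrier_vec q"
    and dyn: "\<And>s. s < k \<Longrightarrow> z (Suc s) = F *\<^sub>v z s + G *\<^sub>v w s"
    and M: "M \<in> carrier_mat h p" and b: "b < h"
  shows "(M *\<^sub>v z k) $ b
           = (M * F ^\<^sub>m k *\<^sub>v z 0) $ b + (\<Sum>l < k. (M * F ^\<^sub>m (k - 1 - l) * G *\<^sub>v w l) $ b)"
  using w dyn M
proof (induction k arbitrary: M)
  case (Suc k)
  have zk: "z k \<in> carrier_vec p" using Suc.prems by (intro trajectory_carrier[where z = z, OF F G z0]) auto
  have wk: "w k \<in> carrier_vec q" using Suc.prems by simp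
  have MF: "M * F \<in> carrier_mat h p" using Suc.prems F by simp
  have pow: "M * F ^\<^sub>m Suc j = M * F * F ^\<^sub>m j" for j
    using Suc.prems F by (subst pow_mat_Suc_left[OF F]) (simp add: assoc_mult_mat[of _ h p _ p _ p])
  have "(M *\<^sub>v z (Suc k)) $ b = (M * F *\<^sub>v z k) $ b + (M * G *\<^sub>v w k) $ b"
    using Suc.prems F G zk wk b by (simp add: mult_add_distrib_mat_vec[of _ h p])
  also have "(M * F *\<^sub>v z k) $ b
      = (M * F * F ^\<^sub>m k *\<^sub>v z 0) $ b + (\<Sum>l < k. (M * F * F ^\<^sub>m (k - 1 - l) * G *\<^sub>v w l) $ b)"
    using Suc.IH[OF _ _ MF] Suc.prems by simp
  also have "(\<Sum>l < k. (M * F * F ^\<^sub>m (k - 1 - l) * G *\<^sub>v w l) $ b)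
      = (\<Sum>l < k. (M * F ^\<^sub>m (Suc k - 1 - l) * G *\<^sub>v w l) $ b)"
  proof (rule sum.cong[OF refl])
    fix l assume "l \<in> {..<k}"
    then have "Suc k - 1 - l = Suc (k - 1 - l)" by auto
    then show "(M * F * F ^\<^sub>m (k - 1 - l) * G *\<^sub>v w l) $ b
        = (M * F ^\<^sub>m (Suc k - 1 - l) * G *\<^sub>v w l) $ b"
      by (simp only: pow)
  qed
  finally show ?case using Suc.prems F by (simp only: pow) (simp add: add.assoc)
qed (use F in simp)

lemma trajectory_stack_outputs:
  assumes A: "A \<in> carrier_mat n n" and B: "B \<in> carrier_mat n m" and C: "C \<in> carrier_mat r n"
    and z0: "z 0 \<in> carrier_vec n" and w: "\<And>s. s < L \<Longrightarrow> w s \<in> carrier_vec m"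
    and dyn: "\<And>s. s < L \<Longrightarrow> z (Suc s) = A *\<^sub>v z s + B *\<^sub>v w s"
  shows "stack L r (\<lambda>l. C *\<^sub>v z l) = obs_mat L C A *\<^sub>v z 0 + toep_mat L A B C *\<^sub>v stack L m w"
proof (rule eq_vecI)
  fix i assume "i < dim_vec (obs_mat L C A *\<^sub>v z 0 + toep_mat L A B C *\<^sub>v stack L m w)"
  then obtain l e where l: "l < L" and e: "e < r" and i: "i = l * r + e"
    using C by (auto simp: toep_mat_def elim: block_indexE)
  have "(C *\<^sub>v z l) $ e
      = (C * A ^\<^sub>m l *\<^sub>v z 0) $ e + (\<Sum>j < l. (C * A ^\<^sub>m (l - 1 - j) * B *\<^sub>v w j) $ e)"
    using l w dyn by (intro trajectory_mult_index[where z = z, OF A B z0 _ _ C e]) auto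
  then show "stack L r (\<lambda>l. C *\<^sub>v z l) $ i
      = (obs_mat L C A *\<^sub>v z 0 + toep_mat L A B C *\<^sub>v stack L m w) $ i"
    using i A B C block_index_less[OF l e]
    by (simp del: index_mult_mat_vec add: obs_mat_mult_vec[OF A C z0] toep_mat_mult_stack[OF A B C w l e]
        carrier_matD[OF toep_mat_carrier[OF B C]] l e)
qed (use C in simp)

lemma trajectory_final_state:
  assumes A: "A \<in> carrier_mat n n" and B: "B \<in> carrier_mat n m"
    and z0: "z 0 \<in> carrier_vec n" and w: "\<And>s. s < L \<Longrightarrow> w s \<in> carrier_vec m"
    and dyn: "\<And>s. s < L \<Longrightarrow> z (Suc s) = A *\<^sub>v z s + B *\<^sub>v w s"
  shows "z L = A ^\<^sub>m L *\<^sub>v z 0 + reach_mat L A B *\<^sub>v stack L m w"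
proof (rule eq_vecI)
  have zL: "z L \<in> carrier_vec n" by (rule trajectory_carrier[where z = z, OF A B z0 w dyn])
  fix i assume "i < dim_vec (A ^\<^sub>m L *\<^sub>v z 0 + reach_mat L A B *\<^sub>v stack L m w)"
  then have i: "i < n" using B by (simp add: reach_mat_def)
  have "(1\<^sub>m n *\<^sub>v z L) $ i
      = (1\<^sub>m n * A ^\<^sub>m L *\<^sub>v z 0) $ i
        + (\<Sum>j < L. (1\<^sub>m n * A ^\<^sub>m (L - 1 - j) * B *\<^sub>v w j) $ i)"
    using w dyn by (intro trajectory_mult_index[where z = z, OF A B z0 _ _ one_carrier_mat i])
  then show "z L $ i = (A ^\<^sub>m L *\<^sub>v z 0 + reach_mat L A B *\<^sub>v stack L m w) $ i"
    using A B zL i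
    by (simp del: index_mult_mat_vec add: reach_mat_mult_stack[OF A B w i] carrier_matD[OF reach_mat_carrier[OF B]])
qed (use trajectory_carrier[where z = z, OF A B z0 w dyn] B in simp)

section \<open>The pseudoinverse of a matrix of full column rank\<close>

lemma penrose_conditions_unique:
  fixes M X Y :: "'a :: comm_ring_1 mat"
  assumes M: "M \<in> carrier_mat p q" and X: "X \<in> carrier_mat q p" and Y: "Y \<in> carrier_mat q p"
    and MXM: "M * X * M = M" and XMX: "X * M * X = X"
    and MX: "(M * X)\<^sup>T = M * X" and XM: "(X * M)\<^sup>T = X * M"
    and MYM: "M * Y * M = M" and YMY: "Y * M * Y = Y"
    and MY: "(M * Y)\<^sup>T = M * Y" and YM: "(Y * M)\<^sup>T = Y * M"
  shows "X = Y"
proof -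
  have MXc: "M * X \<in> carrier_mat p p" and MYc: "M * Y \<in> carrier_mat p p"
    and XMc: "X * M \<in> carrier_mat q q" and YMc: "Y * M \<in> carrier_mat q q"
    using M X Y by auto
  have "M * X = (M * Y * (M * X))\<^sup>T"
    by (simp only: assoc_mult_mat[OF MYc M X, symmetric] MYM MX)
  also have "\<dots> = M * X * (M * Y)"
    by (simp only: transpose_mult[OF MYc MXc] MX MY)
  also have "\<dots> = M * Y"
    by (simp only: assoc_mult_mat[OF MXc M Y, symmetric] MXM)
  finally have MX_MY: "M * X = M * Y" .
  have "X * M = (X * M * (Y * M))\<^sup>T"
    by (simp only: assoc_mult_mat[OF XMc Y M, symmetric] assoc_mult_mat[OF X M Y]
        assoc_mult_mat[OF X MYc M] MYM XM)
  also have "\<dots> = Y * M * (X * M)"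
    by (simp only: transpose_mult[OF XMc YMc] XM YM)
  also have "\<dots> = Y * M"
    by (simp only: assoc_mult_mat[OF YMc X M, symmetric] assoc_mult_mat[OF Y M X]
        assoc_mult_mat[OF Y MXc M] MXM)
  finally have XM_YM: "X * M = Y * M" .
  have "X = X * (M * Y)"
    by (simp only: assoc_mult_mat[OF X M X, symmetric] XMX MX_MY[symmetric])
  also have "\<dots> = Y"
    by (simp only: assoc_mult_mat[OF X M Y, symmetric] XM_YM YMY)
  finally show ?thesis .
qed

lemma pinv_eqI:
  assumes "X \<in> carrier_mat (dim_col M) (dim_row M)"
    and "M * X * M = M" "X * M * X = X" "(M * X)\<^sup>T = M * X" "(X * M)\<^sup>T = X * M"
  shows "pinv M = X"
  unfolding pinv_def
proof (rule the_equality)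
  fix Y assume "Y \<in> carrier_mat (dim_col M) (dim_row M) \<and> M * Y * M = M \<and> Y * M * Y = Y
      \<and> (M * Y)\<^sup>T = M * Y \<and> (Y * M)\<^sup>T = Y * M"
  then show "Y = X"
    using assms penrose_conditions_unique[of M "dim_row M" "dim_col M" Y X] by auto
qed (use assms in auto)

lemma (in vec_space) full_column_rank_kernel:
  assumes A: "A \<in> carrier_mat n nc" and rk: "rank A = nc"
    and v: "v \<in> carrier_vec nc" and Av: "A *\<^sub>v v = 0\<^sub>v n"
  shows "v = 0\<^sub>v nc"
proof (rule ccontr)
  assume nz: "v \<noteq> 0\<^sub>v nc"
  have "distinct (cols A)"
  proof (rule ccontr)
    assume "\<not> distinct (cols A)"
    then have card_cols: "card (set (cols A)) < nc"
      using A card_distinct[of "cols A"] card_length[of "cols A"] by fastforce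
    obtain S where S: "maximal S (\<lambda>T. T \<subseteq> set (cols A) \<and> lin_indpt T)"
      using maximal_exists[of "\<lambda>T. T \<subseteq> set (cols A) \<and> lin_indpt T" "card (set (cols A))" "{}"]
      by (meson List.finite_set card_mono empty_iff empty_subsetI finite_lin_indpt2 rev_finite_subset)
    then have "card S \<le> card (set (cols A))" by (simp add: card_mono maximal_def)
    then show False using rank_card_indpt[OF A S] rk card_cols by simp
  qed
  then show False
    using full_rank_lin_indpt[OF A rk] lin_depI[OF A v nz Av] by simp
qed

lemma real_vec_self_scalar_prod_eq_0:
  "(v :: real vec) \<in> carrier_vec n \<Longrightarrow> v \<bullet> v = 0 \<longleftrightarrow> v = 0\<^sub>v n"
proof -
  have "conjugate v = v" by (rule eq_vecI) auto
  then show "v \<in> carrier_vec n \<Longrightarrow> v \<bullet> v = 0 \<longleftrightarrow> v = 0\<^sub>v n"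
    using conjugate_square_eq_0_vec[of v n] by simp
qed

lemma mat_inverse_if_kernel_trivial:
  fixes A :: "'a :: field mat"
  assumes A: "A \<in> carrier_mat n n"
    and kernel: "\<And>v. v \<in> carrier_vec n \<Longrightarrow> A *\<^sub>v v = 0\<^sub>v n \<Longrightarrow> v = 0\<^sub>v n"
  obtains B where "mat_inverse A = Some B" "A * B = 1\<^sub>m n" "B * A = 1\<^sub>m n" "B \<in> carrier_mat n n"
proof -
  have "det A \<noteq> 0" using det_0_iff_vec_prod_zero_field[OF A] kernel by blast
  then have "mat_inverse A \<noteq> None"
    using det_non_zero_imp_unit[OF A, of undefined] mat_inverse(1)[OF A, of undefined] by blast
  then obtain B where "mat_inverse A = Some B" by blast
  with mat_inverse(2)[OF A this] that show ?thesis by blast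
qed

lemma pinv_full_column_rank:
  fixes M :: "real mat"
  assumes M: "M \<in> carrier_mat p n" and rk: "rank_mat M = n"
  shows "pinv M \<in> carrier_mat n p" and "pinv M * M = 1\<^sub>m n"
proof -
  define G where "G = M\<^sup>T * M"
  have G: "G \<in> carrier_mat n n" using M by (simp add: G_def)
  have "v = 0\<^sub>v n" if v: "v \<in> carrier_vec n" and Gv: "G *\<^sub>v v = 0\<^sub>v n" for v
  proof -
    have "(M *\<^sub>v v) \<bullet> (M *\<^sub>v v) = (G *\<^sub>v v) \<bullet> v"
      using M v transpose_vec_mult_scalar[OF M v, of "M *\<^sub>v v"] by (simp add: G_def)
    then have "M *\<^sub>v v = 0\<^sub>v p" using Gv v M by (simp add: real_vec_self_scalar_prod_eq_0[of _ p])
    then show ?thesis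
      using vec_space.full_column_rank_kernel[OF M _ v] rk M by (simp add: rank_mat_def)
  qed
  then obtain Gi where GGi: "G * Gi = 1\<^sub>m n" and GiG: "Gi * G = 1\<^sub>m n" and Gi: "Gi \<in> carrier_mat n n"
    using mat_inverse_if_kernel_trivial[OF G] by metis
  have "G\<^sup>T = G" using M by (simp add: G_def transpose_mult[of _ n p _ n])
  then have GiT_G: "Gi\<^sup>T * G = 1\<^sub>m n" using transpose_mult[OF G Gi] GGi by simp
  have GiT: "Gi\<^sup>T = Gi"
  proof -
    have "Gi\<^sup>T = Gi\<^sup>T * G * Gi"
      using Gi G GGi by (simp add: assoc_mult_mat[of _ n n _ n _ n])
    also have "\<dots> = Gi" using GiT_G Gi by simp
    finally show ?thesis .
  qed
  define X where "X = Gi * M\<^sup>T"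
  have X: "X \<in> carrier_mat n p" using Gi M by (simp add: X_def)
  have XM: "X * M = 1\<^sub>m n"
    using Gi M GiG by (simp add: X_def G_def assoc_mult_mat[of _ n n _ p _ n])
  have MX: "(M * X)\<^sup>T = M * X"
    using M Gi GiT by (simp add: X_def transpose_mult[of _ p n _ p] transpose_mult[of _ n n _ p]
        assoc_mult_mat[of _ p n _ n _ p])
  have "pinv M = X"
  proof (rule pinv_eqI)
    show "M * X * M = M" using M X XM by (simp add: assoc_mult_mat[of _ p n _ p _ n])
    show "X * M * X = X" using X XM by simp
  qed (use M X XM MX in simp_all)
  then show "pinv M \<in> carrier_mat n p" "pinv M * M = 1\<^sub>m n" using X XM by simp_all
qed

section \<open>The IOH system\<close>

lemma Gamma_mat_carrier:
  assumes "A \<in> carrier_mat n n" "B \<in> carrier_mat n m" "C \<in> carrier_mat r n"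
    and "pinv (obs_mat L C A) \<in> carrier_mat n (L * r)"
  shows "Gamma_mat L A B C \<in> carrier_mat n (L * m + L * r)"
  using assms by (simp add: Gamma_mat_def hcat_def)

lemma Gamma_mat_mult_append:
  fixes x0 w :: "real vec"
  assumes A: "A \<in> carrier_mat n n" and B: "B \<in> carrier_mat n m" and C: "C \<in> carrier_mat r n"
    and rank: "rank_mat (obs_mat L C A) = n"
    and x0: "x0 \<in> carrier_vec n" and w: "w \<in> carrier_vec (L * m)"
  shows "Gamma_mat L A B C *\<^sub>v (w @\<^sub>v (obs_mat L C A *\<^sub>v x0 + toep_mat L A B C *\<^sub>v w))
           = A ^\<^sub>m L *\<^sub>v x0 + reach_mat L A B *\<^sub>v w"
proof -
  let ?O = "obs_mat L C A" and ?T = "toep_mat L A B C" and ?R = "reach_mat L A B"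
  let ?P = "pinv (obs_mat L C A)" and ?AL = "A ^\<^sub>m L"
  have O: "?O \<in> carrier_mat (L * r) n" and T: "?T \<in> carrier_mat (L * r) (L * m)"
    and R: "?R \<in> carrier_mat n (L * m)" and AL: "?AL \<in> carrier_mat n n"
    using A obs_mat_carrier[OF C] toep_mat_carrier[OF B C] reach_mat_carrier[OF B] by auto
  have P: "?P \<in> carrier_mat n (L * r)" and PO: "?P * ?O = 1\<^sub>m n"
    using pinv_full_column_rank[OF O rank] by simp_all
  have ALP: "?AL * ?P \<in> carrier_mat n (L * r)" using AL P by simp
  have RAPT: "?R - ?AL * ?P * ?T \<in> carrier_mat n (L * m)"
    using R ALP T by (meson minus_carrier_mat mult_carrier_mat)
  have Ox0: "?O *\<^sub>v x0 \<in> carrier_vec (L * r)" and Tw: "?T *\<^sub>v w \<in> carrier_vec (L * r)"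
    using O T x0 w by simp_all
  have "Gamma_mat L A B C *\<^sub>v (w @\<^sub>v (?O *\<^sub>v x0 + ?T *\<^sub>v w))
      = (?R - ?AL * ?P * ?T) *\<^sub>v w + (?AL * ?P) *\<^sub>v (?O *\<^sub>v x0 + ?T *\<^sub>v w)"
    unfolding Gamma_mat_def by (rule hcat_mult_append[OF RAPT ALP w add_carrier_vec[OF Ox0 Tw]])
  also have "(?R - ?AL * ?P * ?T) *\<^sub>v w = ?R *\<^sub>v w - ?AL *\<^sub>v (?P *\<^sub>v (?T *\<^sub>v w))"
    by (simp only: minus_mult_distrib_mat_vec[OF R mult_carrier_mat[OF ALP T] w]
        assoc_mult_mat_vec[OF ALP T w] assoc_mult_mat_vec[OF AL P Tw])
  also have "(?AL * ?P) *\<^sub>v (?O *\<^sub>v x0 + ?T *\<^sub>v w) = ?AL *\<^sub>v x0 + ?AL *\<^sub>v (?P *\<^sub>v (?T *\<^sub>v w))"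
  proof -
    have "?P *\<^sub>v (?O *\<^sub>v x0) = x0"
      using assoc_mult_mat_vec[OF P O x0] PO x0 by simp
    then show ?thesis
      by (simp only: mult_add_distrib_mat_vec[OF ALP Ox0 Tw] assoc_mult_mat_vec[OF AL P Ox0]
          assoc_mult_mat_vec[OF AL P Tw])
  qed
  also have "?R *\<^sub>v w - ?AL *\<^sub>v (?P *\<^sub>v (?T *\<^sub>v w)) + (?AL *\<^sub>v x0 + ?AL *\<^sub>v (?P *\<^sub>v (?T *\<^sub>v w)))
      = ?AL *\<^sub>v x0 + ?R *\<^sub>v w"
  proof -
    have cancel: "a - b + (c + b) = c + a"
      if "a \<in> carrier_vec n" "b \<in> carrier_vec n" "c \<in> carrier_vec n" for a b c :: "real vec"
      using that by (intro eq_vecI) auto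
    show ?thesis using R AL P T w x0 by (intro cancel) (metis mult_mat_vec_carrier)+
  qed
  finally show ?thesis .
qed

lemma Gamma_mat_mult_ioh:
  fixes x u y :: "nat \<Rightarrow> real vec"
  assumes A: "A \<in> carrier_mat n n" and B: "B \<in> carrier_mat n m" and C: "C \<in> carrier_mat r n"
    and rank: "rank_mat (obs_mat L C A) = n"
    and x: "\<And>s. x s \<in> carrier_vec n" and u: "\<And>s. u s \<in> carrier_vec m"
    and dyn: "\<And>s. x (Suc s) = A *\<^sub>v x s + B *\<^sub>v u s" and y: "\<And>s. y s = C *\<^sub>v x s"
    and t: "L \<le> t"
  shows "Gamma_mat L A B C *\<^sub>v ioh L m r u y t = x t"
proof -
  let ?up = "stack L m (\<lambda>l. u (t - L + l))"
  have "stack L r (\<lambda>l. y (t - L + l)) = stack L r (\<lambda>l. C *\<^sub>v x (t - L + l))" using y by simp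
  also have "\<dots> = obs_mat L C A *\<^sub>v x (t - L) + toep_mat L A B C *\<^sub>v ?up"
    using trajectory_stack_outputs[where z = "\<lambda>s. x (t - L + s)" and w = "\<lambda>s. u (t - L + s)", OF A B C]
      x u dyn by simp
  finally have yp: "stack L r (\<lambda>l. y (t - L + l)) = obs_mat L C A *\<^sub>v x (t - L) + toep_mat L A B C *\<^sub>v ?up" .
  have xt: "x t = A ^\<^sub>m L *\<^sub>v x (t - L) + reach_mat L A B *\<^sub>v ?up"
    using trajectory_final_state[where z = "\<lambda>s. x (t - L + s)" and w = "\<lambda>s. u (t - L + s)" and L = L, OF A B]
      x u dyn t by simp
  show ?thesis
    unfolding ioh_eq_stack yp xt by (rule Gamma_mat_mult_append[OF A B C rank x stack_carrier])
qed

lemma ioh_Suc_Theta_Pi: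
  fixes u y :: "nat \<Rightarrow> real vec"
  assumes A: "A \<in> carrier_mat n n" and B: "B \<in> carrier_mat n m" and C: "C \<in> carrier_mat r n"
    and rank: "rank_mat (obs_mat L C A) = n" and L: "0 < L" and t: "L \<le> t"
    and u: "\<And>s. u s \<in> carrier_vec m" and y: "\<And>s. y s \<in> carrier_vec r"
    and yt: "(C * Gamma_mat L A B C) *\<^sub>v ioh L m r u y t = y t"
  shows "Theta_mat L A B C *\<^sub>v ioh L m r u y t + Pi_mat L m r *\<^sub>v u t = ioh L m r u y (Suc t)"
proof -
  let ?v = "ioh L m r u y t" and ?G = "Gamma_mat L A B C" and ?E = "E_mat L m r"
  let ?up = "stack L m (\<lambda>l. u (t - L + l))" and ?yp = "stack L r (\<lambda>l. y (t - L + l))"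
  let ?Sm = "shift_mat L m" and ?Sr = "shift_mat L r"
  let ?D = "four_block_mat ?Sm (0\<^sub>m (L * m) (L * r)) (0\<^sub>m (L * r) (L * m)) ?Sr"
  let ?lu = "stack L m (\<lambda>l. if l = L - 1 then u t else 0\<^sub>v m)"
  let ?ly = "stack L r (\<lambda>l. if l = L - 1 then y t else 0\<^sub>v r)"
  have G: "?G \<in> carrier_mat n (L * m + L * r)"
    using pinv_full_column_rank(1)[OF obs_mat_carrier[OF C] rank] A B C by (rule_tac Gamma_mat_carrier) auto
  have E: "?E \<in> carrier_mat (L * m + L * r) r" by (simp add: E_mat_def algebra_simps)
  have Sm: "?Sm \<in> carrier_mat (L * m) (L * m)" and Sr: "?Sr \<in> carrier_mat (L * r) (L * r)"
    by (simp_all add: shift_mat_def)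
  have D: "?D \<in> carrier_mat (L * m + L * r) (L * m + L * r)" using Sm Sr by auto
  have v: "?v = ?up @\<^sub>v ?yp" by (rule ioh_eq_stack)
  have vc: "?v \<in> carrier_vec (L * m + L * r)" unfolding v by simp
  have "?D *\<^sub>v ?v = (?Sm *\<^sub>v ?up) @\<^sub>v (?Sr *\<^sub>v ?yp)"
    unfolding v using Sm Sr by (subst four_block_mat_mult_vec[OF Sm _ _ Sr]) auto
  moreover have "(?E * C * ?G) *\<^sub>v ?v = ?E *\<^sub>v y t"
    using assoc_mult_mat[OF E C G] assoc_mult_mat_vec[OF E mult_carrier_mat[OF C G] vc]
      assoc_mult_mat_vec[OF C G vc] yt by simp
  moreover have "Theta_mat L A B C = ?D + ?E * C * ?G" using B C by (simp add: Theta_mat_def)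
  ultimately have "Theta_mat L A B C *\<^sub>v ?v = ((?Sm *\<^sub>v ?up) @\<^sub>v (?Sr *\<^sub>v ?yp)) + ?E *\<^sub>v y t"
    using D E C G vc by (simp add: add_mult_distrib_mat_vec[of _ "L * m + L * r" "L * m + L * r"])
  also have "?E *\<^sub>v y t = 0\<^sub>v (L * m) @\<^sub>v ?ly" by (rule E_mat_mult_vec[OF L y])
  finally have "Theta_mat L A B C *\<^sub>v ?v + Pi_mat L m r *\<^sub>v u t
      = ((?Sm *\<^sub>v ?up) @\<^sub>v (?Sr *\<^sub>v ?yp)) + (0\<^sub>v (L * m) @\<^sub>v ?ly) + (?lu @\<^sub>v 0\<^sub>v (L * r))"
    using Pi_mat_mult_vec[OF L u] by simp
  also have "\<dots> = (?Sm *\<^sub>v ?up + ?lu) @\<^sub>v (?Sr *\<^sub>v ?yp + ?ly)"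
    using Sm Sr by (simp add: append_vec_add[of _ "L * m" _ _ "L * r"])
  also have "\<dots> = ioh L m r u y (Suc t)"
    unfolding ioh_eq_stack[of L m r u y "Suc t"] shift_mat_mult_stack
    using stack_window_shift[of u, OF u t] stack_window_shift[of y, OF y t] by simp
  finally show ?thesis .
qed

section \<open>The controller\<close>

lemma dim_Xi_mat [simp]: "dim_row (Xi_mat L m K) = L * m" "dim_col (Xi_mat L m K) = L * m"
  by (simp_all add: Xi_mat_def)

lemma dim_Lambda_mat [simp]: "dim_row (Lambda_mat L m r K) = L * m" "dim_col (Lambda_mat L m r K) = r"
  by (simp_all add: Lambda_mat_def)

lemma dim_Omega_mat [simp]: "dim_row (Omega_mat L m) = m" "dim_col (Omega_mat L m) = L * m"
  by (simp_all add: Omega_mat_def)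

lemma Xi_mat_carrier: "Xi_mat L m K \<in> carrier_mat (L * m) (L * m)"
  by (simp add: Xi_mat_def)

lemma Lambda_mat_carrier: "Lambda_mat L m r K \<in> carrier_mat (L * m) r"
  by (simp add: Lambda_mat_def)

lemma Omega_mat_carrier: "Omega_mat L m \<in> carrier_mat m (L * m)"
  by (simp add: Omega_mat_def)

lemma Omega_mat_mult_vec_index:
  assumes L: "0 < L" and w: "w \<in> carrier_vec (L * m)" and f: "f < m"
  shows "(Omega_mat L m *\<^sub>v w) $ f = w $ ((L - 1) * m + f)"
proof -
  have "(Omega_mat L m *\<^sub>v w) $ f = (\<Sum>c < L * m. (if c = (L - 1) * m + f then 1 else 0) * w $ c)"
    unfolding index_mult_mat_vec_sum[OF Omega_mat_carrier w f] using f by (intro sum.cong) (auto simp: Omega_mat_def)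
  also have "\<dots> = w $ ((L - 1) * m + f)"
    using block_index_less[of "L - 1" L f m] L f by (simp add: if_distrib[of "\<lambda>x. x * _"] cong: if_cong)
  finally show ?thesis .
qed

(* Slot j = 0, ..., L - 1 of the window (oldest sample first) is weighted by A_(L-j) and B_(L-j). *)
definition arx_term ::
    "nat \<Rightarrow> nat \<Rightarrow> nat \<Rightarrow> real mat \<Rightarrow> nat \<Rightarrow> real vec \<Rightarrow> real vec \<Rightarrow> real vec" where
  "arx_term L m r K j ut yt = K_A L m K (L - j) *\<^sub>v ut + K_B L m r K (L - j) *\<^sub>v yt"

lemma controller_step_entry:
  assumes L: "0 < L" and w: "w \<in> carrier_vec (L * m)" and yt: "yt \<in> carrier_vec r"
    and j: "j < L" and e: "e < m"
  shows "(Xi_mat L m K *\<^sub>v w + Lambda_mat L m r K *\<^sub>v yt) $ (j * m + e)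
           = (if j = 0 then 0 else w $ ((j - 1) * m + e)) + arx_term L m r K j (Omega_mat L m *\<^sub>v w) yt $ e"
proof -
  let ?a = "j * m + e" and ?Xi = "Xi_mat L m K" and ?KA = "K_A L m K (L - j)" and ?KB = "K_B L m r K (L - j)"
  have a: "?a < L * m" using j e by (rule block_index_less)
  have Lm: "L * m = (L - 1) * m + m" using L by (cases L) auto
  have Om: "Omega_mat L m *\<^sub>v w \<in> carrier_vec m" using mult_mat_vec_carrier[OF Omega_mat_carrier w] .
  have "(?Xi *\<^sub>v w) $ ?a = (\<Sum>c < (L - 1) * m. ?Xi $$ (?a, c) * w $ c)
      + (\<Sum>f < m. ?Xi $$ (?a, (L - 1) * m + f) * w $ ((L - 1) * m + f))"
    using a w by (simp add: index_mult_mat_vec_sum[OF Xi_mat_carrier] Lm sum_lessThan_add del: index_mult_mat_vec)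
  also have "(\<Sum>c < (L - 1) * m. ?Xi $$ (?a, c) * w $ c)
      = (\<Sum>c < (L - 1) * m. if c = ?a - m \<and> m \<le> ?a then w $ c else 0)"
    using a Lm by (intro sum.cong refl) (auto simp: Xi_mat_def)
  also have "\<dots> = (if j = 0 then 0 else w $ ((j - 1) * m + e))"
  proof (cases j)
    case (Suc i)
    then have "?a - m = i * m + e" and "i * m + e < (L - 1) * m"
      using block_index_less[of i "L - 1" e m] j e by auto
    then show ?thesis using Suc by simp
  qed (use e in simp)
  also have "(\<Sum>f < m. ?Xi $$ (?a, (L - 1) * m + f) * w $ ((L - 1) * m + f))
      = (?KA *\<^sub>v (Omega_mat L m *\<^sub>v w)) $ e"
  proof -
    have "(\<Sum>f < m. ?Xi $$ (?a, (L - 1) * m + f) * w $ ((L - 1) * m + f))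
        = (\<Sum>f < m. ?KA $$ (e, f) * (Omega_mat L m *\<^sub>v w) $ f)"
      using a e Lm L w by (intro sum.cong refl) (simp add: Xi_mat_def Omega_mat_mult_vec_index del: index_mult_mat_vec)
    also have "\<dots> = (?KA *\<^sub>v (Omega_mat L m *\<^sub>v w)) $ e"
      using Om e by (intro index_mult_mat_vec_sum[symmetric]) (auto simp: K_A_def)
    finally show ?thesis .
  qed
  moreover have "(Lambda_mat L m r K *\<^sub>v yt) $ ?a = (?KB *\<^sub>v yt) $ e"
  proof -
    have "(Lambda_mat L m r K *\<^sub>v yt) $ ?a = (\<Sum>g < r. ?KB $$ (e, g) * yt $ g)"
      unfolding index_mult_mat_vec_sum[OF Lambda_mat_carrier yt a]
      using a e by (intro sum.cong) (auto simp: Lambda_mat_def)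
    also have "\<dots> = (?KB *\<^sub>v yt) $ e"
      using yt e by (intro index_mult_mat_vec_sum[symmetric]) (auto simp: K_B_def)
    finally show ?thesis .
  qed
  ultimately show ?thesis
    using a Xi_mat_carrier[of L m K] Lambda_mat_carrier[of L m r K] e
    by (simp add: arx_term_def K_A_def K_B_def del: index_mult_mat_vec)
qed

lemma controller_state_entry:
  fixes \<xi> u y :: "nat \<Rightarrow> real vec"
  assumes L: "0 < L" and \<xi>: "\<And>t. \<xi> t \<in> carrier_vec (L * m)" and y: "\<And>t. y t \<in> carrier_vec r"
    and \<xi>_dyn: "\<And>t. \<xi> (Suc t) = Xi_mat L m K *\<^sub>v \<xi> t + Lambda_mat L m r K *\<^sub>v y t"
    and u_out: "\<And>t. u t = Omega_mat L m *\<^sub>v \<xi> t"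
    and j: "j < L" and e: "e < m" and t: "j < t"
  shows "\<xi> t $ (j * m + e) = (\<Sum>i \<le> j. arx_term L m r K i (u (t - 1 - j + i)) (y (t - 1 - j + i)) $ e)"
  using j t
proof (induction j arbitrary: t)
  case 0
  then obtain s where t: "t = Suc s" by (cases t) auto
  show ?case
    using controller_step_entry[OF L \<xi> y 0(1) e] unfolding t \<xi>_dyn u_out by simp
next
  case (Suc j)
  then obtain s where t: "t = Suc s" and s: "j < s" by (cases t) auto
  have "\<xi> t $ (Suc j * m + e) = \<xi> s $ (j * m + e) + arx_term L m r K (Suc j) (u s) (y s) $ e"
    using controller_step_entry[OF L \<xi> y Suc.prems(1) e] unfolding t \<xi>_dyn u_out by simp
  also have "\<xi> s $ (j * m + e) = (\<Sum>i \<le> j. arx_term L m r K i (u (s - 1 - j + i)) (y (s - 1 - j + i)) $ e)"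
    using Suc.IH[of s] Suc.prems s by simp
  finally show ?case
    using s unfolding t by (simp add: Suc_diff_Suc)
qed

lemma mult_ioh_index:
  fixes u y :: "nat \<Rightarrow> real vec"
  assumes K: "K \<in> carrier_mat m (L * (m + r))"
    and u: "\<And>s. u s \<in> carrier_vec m" and y: "\<And>s. y s \<in> carrier_vec r" and e: "e < m"
  shows "(K *\<^sub>v ioh L m r u y t) $ e = (\<Sum>i < L. arx_term L m r K i (u (t - L + i)) (y (t - L + i)) $ e)"
proof -
  have K': "K \<in> carrier_mat m (L * m + L * r)" using K by (simp add: algebra_simps)
  have v: "ioh L m r u y t \<in> carrier_vec (L * m + L * r)" by (simp add: ioh_def algebra_simps)
  have "(K *\<^sub>v ioh L m r u y t) $ e = (\<Sum>c < L * m + L * r. K $$ (e, c) * ioh L m r u y t $ c)"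
    by (rule index_mult_mat_vec_sum[OF K' v e])
  also have "\<dots> = (\<Sum>i < L. \<Sum>f < m. K $$ (e, i * m + f) * u (t - L + i) $ f)
        + (\<Sum>i < L. \<Sum>g < r. K $$ (e, L * m + (i * r + g)) * y (t - L + i) $ g)"
  proof -
    let ?up = "stack L m (\<lambda>l. u (t - L + l))" and ?yp = "stack L r (\<lambda>l. y (t - L + l))"
    have up: "(?up @\<^sub>v ?yp) $ (l * m + f) = u (t - L + l) $ f" if "l < L" "f < m" for l f
      using that block_index_less[OF that] by auto
    have yp: "(?up @\<^sub>v ?yp) $ (L * m + (l * r + g)) = y (t - L + l) $ g" if "l < L" "g < r" for l g
      using that block_index_less[OF that] by auto
    show ?thesis
      unfolding sum_lessThan_add ioh_eq_stack sum_blocks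
      by (intro arg_cong2[where f = "(+)"] sum.cong refl) (simp_all add: up yp)
  qed
  also have "\<dots> = (\<Sum>i < L. arx_term L m r K i (u (t - L + i)) (y (t - L + i)) $ e)"
  proof -
    have "arx_term L m r K i (u (t - L + i)) (y (t - L + i)) $ e
        = (\<Sum>f < m. K $$ (e, i * m + f) * u (t - L + i) $ f)
          + (\<Sum>g < r. K $$ (e, L * m + (i * r + g)) * y (t - L + i) $ g)" if i: "i < L" for i
    proof -
      have KA: "K_A L m K (L - i) \<in> carrier_mat m m" and KB: "K_B L m r K (L - i) \<in> carrier_mat m r"
        by (simp_all add: K_A_def K_B_def)
      have "(K_A L m K (L - i) *\<^sub>v u (t - L + i)) $ e = (\<Sum>f < m. K $$ (e, i * m + f) * u (t - L + i) $ f)"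
        unfolding index_mult_mat_vec_sum[OF KA u e] using i e by (intro sum.cong refl) (simp add: K_A_def)
      moreover have "(K_B L m r K (L - i) *\<^sub>v y (t - L + i)) $ e
          = (\<Sum>g < r. K $$ (e, L * m + (i * r + g)) * y (t - L + i) $ g)"
        unfolding index_mult_mat_vec_sum[OF KB y e] using i e by (intro sum.cong refl) (simp add: K_B_def add.assoc)
      ultimately show ?thesis
        using KB e by (simp add: arx_term_def del: index_mult_mat_vec)
    qed
    then show ?thesis
      unfolding sum.distrib[symmetric] by (intro sum.cong refl) simp
  qed
  finally show ?thesis .
qed

lemma controller_realizes_arx:
  fixes \<xi> u y :: "nat \<Rightarrow> real vec"
  assumes L: "0 < L" and K: "K \<in> carrier_mat m (L * (m + r))"
    and \<xi>: "\<And>t. \<xi> t \<in> carrier_vec (L * m)" and y: "\<And>t. y t \<in> carrier_vec r"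
    and \<xi>_dyn: "\<And>t. \<xi> (Suc t) = Xi_mat L m K *\<^sub>v \<xi> t + Lambda_mat L m r K *\<^sub>v y t"
    and u_out: "\<And>t. u t = Omega_mat L m *\<^sub>v \<xi> t"
    and t: "L \<le> t"
  shows "u t = K *\<^sub>v ioh L m r u y t"
proof (rule eq_vecI)
  have u: "u s \<in> carrier_vec m" for s
    unfolding u_out by (rule mult_mat_vec_carrier[OF Omega_mat_carrier \<xi>])
  fix e assume "e < dim_vec (K *\<^sub>v ioh L m r u y t)"
  then have e: "e < m" using K by simp
  have "u t $ e = \<xi> t $ ((L - 1) * m + e)"
    unfolding u_out by (rule Omega_mat_mult_vec_index[OF L \<xi> e])
  also have "\<dots> = (\<Sum>i \<le> L - 1. arx_term L m r K i (u (t - 1 - (L - 1) + i)) (y (t - 1 - (L - 1) + i)) $ e)"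
    using L t by (intro controller_state_entry[where \<xi> = \<xi> and u = u and y = y, OF L \<xi> y \<xi>_dyn u_out _ e]) auto
  also have "\<dots> = (\<Sum>i < L. arx_term L m r K i (u (t - L + i)) (y (t - L + i)) $ e)"
  proof -
    have "{..L - 1} = {..<L}" and "t - 1 - (L - 1) = t - L" using L t by auto
    then show ?thesis by simp
  qed
  also have "\<dots> = (K *\<^sub>v ioh L m r u y t) $ e"
    by (rule mult_ioh_index[OF K u y e, symmetric])
  finally show "u t $ e = (K *\<^sub>v ioh L m r u y t) $ e" .
qed (use K in \<open>simp add: u_out Omega_mat_def\<close>)

lemma Xi_mat_free_response:
  assumes L: "0 < L" and v: "v \<in> carrier_vec (L * m)"
    and silent: "\<And>s. s < L \<Longrightarrow> Omega_mat L m *\<^sub>v (Xi_mat L m K ^\<^sub>m s *\<^sub>v v) = 0\<^sub>v m"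
    and s: "s \<le> j" and j: "j < L" and e: "e < m"
  shows "(Xi_mat L m K ^\<^sub>m s *\<^sub>v v) $ (j * m + e) = v $ ((j - s) * m + e)"
  using s j
proof (induction s arbitrary: j)
  case (Suc s)
  let ?Xi = "Xi_mat L m K" and ?La = "Lambda_mat L m r K"
  obtain i where j: "j = Suc i" and s: "s \<le> i" using Suc.prems by (cases j) auto
  have \<xi>: "?Xi ^\<^sub>m s *\<^sub>v v \<in> carrier_vec (L * m)"
    by (rule mult_mat_vec_carrier[OF pow_carrier_mat[OF Xi_mat_carrier] v])
  have "?La *\<^sub>v 0\<^sub>v r = 0\<^sub>v (L * m)"
    using Lambda_mat_carrier[of L m r K] by (intro eq_vecI) auto
  moreover have "?Xi ^\<^sub>m Suc s *\<^sub>v v = ?Xi *\<^sub>v (?Xi ^\<^sub>m s *\<^sub>v v)"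
    by (simp only: pow_mat_Suc_left[OF Xi_mat_carrier]
        assoc_mult_mat_vec[OF Xi_mat_carrier pow_carrier_mat[OF Xi_mat_carrier] v])
  ultimately have step: "?Xi ^\<^sub>m Suc s *\<^sub>v v = ?Xi *\<^sub>v (?Xi ^\<^sub>m s *\<^sub>v v) + ?La *\<^sub>v 0\<^sub>v r"
    using mult_mat_vec_carrier[OF Xi_mat_carrier \<xi>] by simp
  have "arx_term L m r K j (0\<^sub>v m) (0\<^sub>v r) $ e = 0"
    using e by (simp add: arx_term_def K_A_def K_B_def)
  then have "(?Xi ^\<^sub>m Suc s *\<^sub>v v) $ (j * m + e) = (?Xi ^\<^sub>m s *\<^sub>v v) $ (i * m + e)"
    using controller_step_entry[OF L \<xi> zero_carrier_vec Suc.prems(2) e] silent[of s] Suc.prems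
    unfolding step j by simp
  then show ?case using Suc.IH[of i] Suc.prems s j by simp
qed (use v in \<open>simp add: Xi_mat_def\<close>)

lemma controller_obs_mat_kernel:
  assumes L: "0 < L" and v: "v \<in> carrier_vec (L * m)"
    and Ov: "obs_mat L (Omega_mat L m) (Xi_mat L m K) *\<^sub>v v = 0\<^sub>v (L * m)"
  shows "v = 0\<^sub>v (L * m)"
proof -
  let ?Xi = "Xi_mat L m K" and ?Om = "Omega_mat L m"
  have silent: "?Om *\<^sub>v (?Xi ^\<^sub>m s *\<^sub>v v) = 0\<^sub>v m" if "s < L" for s
  proof -
    have "stack L m (\<lambda>l. ?Om * ?Xi ^\<^sub>m l *\<^sub>v v) = stack L m (\<lambda>_. 0\<^sub>v m)"
      using Ov obs_mat_mult_vec[OF Xi_mat_carrier Omega_mat_carrier v] by (simp add: stack_zero)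
    then have "?Om * ?Xi ^\<^sub>m s *\<^sub>v v = 0\<^sub>v m"
      using mult_mat_vec_carrier[OF mult_carrier_mat[OF Omega_mat_carrier pow_carrier_mat[OF Xi_mat_carrier]] v]
      by (elim stack_eqD[OF _ that]) simp_all
    then show ?thesis
      using assoc_mult_mat_vec[OF Omega_mat_carrier pow_carrier_mat[OF Xi_mat_carrier] v] by simp
  qed
  show ?thesis
  proof (rule eq_vecI)
    fix a assume "a < dim_vec (0\<^sub>v (L * m))"
    then obtain j e where j: "j < L" and e: "e < m" and a: "a = j * m + e" by (auto elim: block_indexE)
    \<comment> \<open>The output at time L - 1 - j reads block j of v.\<close>
    have "v $ a = (?Xi ^\<^sub>m (L - 1 - j) *\<^sub>v v) $ ((L - 1) * m + e)"
      using Xi_mat_free_response[OF L v silent, of "L - 1 - j" "L - 1" e] j e a by simp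
    also have "\<dots> = (?Om *\<^sub>v (?Xi ^\<^sub>m (L - 1 - j) *\<^sub>v v)) $ e"
      by (rule Omega_mat_mult_vec_index[OF L mult_mat_vec_carrier[OF pow_carrier_mat[OF Xi_mat_carrier] v] e, symmetric])
    finally show "v $ a = 0\<^sub>v (L * m) $ a"
      using silent[of "L - 1 - j"] L e a j block_index_less by (simp del: index_mult_mat_vec)
  qed (use v in simp)
qed

lemma controller_obs_mat_inverse:
  assumes L: "0 < L" and w: "w \<in> carrier_vec (L * m)"
  shows "the (mat_inverse (obs_mat L (Omega_mat L m) (Xi_mat L m K))) *\<^sub>v w \<in> carrier_vec (L * m)"
    and "obs_mat L (Omega_mat L m) (Xi_mat L m K)
           *\<^sub>v (the (mat_inverse (obs_mat L (Omega_mat L m) (Xi_mat L m K))) *\<^sub>v w) = w"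
proof -
  let ?O = "obs_mat L (Omega_mat L m) (Xi_mat L m K)"
  have O: "?O \<in> carrier_mat (L * m) (L * m)" by (rule obs_mat_carrier[OF Omega_mat_carrier])
  obtain Q where "mat_inverse ?O = Some Q" and OQ: "?O * Q = 1\<^sub>m (L * m)" and Q: "Q \<in> carrier_mat (L * m) (L * m)"
    using mat_inverse_if_kernel_trivial[OF O controller_obs_mat_kernel[where K = K, OF L]] by blast
  then show "the (mat_inverse ?O) *\<^sub>v w \<in> carrier_vec (L * m)"
    and "?O *\<^sub>v (the (mat_inverse ?O) *\<^sub>v w) = w"
    using w O by (simp_all flip: assoc_mult_mat_vec[OF O Q w])
qed

lemma controller_initial_state:
  fixes ud yd :: "nat \<Rightarrow> real vec"
  assumes L: "0 < L"
    and \<xi>0: "\<xi>0 = the (mat_inverse (obs_mat L (Omega_mat L m) (Xi_mat L m K)))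
                  *\<^sub>v (hcat (1\<^sub>m (L * m)) (- toep_mat L (Xi_mat L m K) (Lambda_mat L m r K) (Omega_mat L m))
                     *\<^sub>v ioh L m r ud yd L)"
  shows "\<xi>0 \<in> carrier_vec (L * m)"
    and "obs_mat L (Omega_mat L m) (Xi_mat L m K) *\<^sub>v \<xi>0
           + toep_mat L (Xi_mat L m K) (Lambda_mat L m r K) (Omega_mat L m) *\<^sub>v stack L r yd = stack L m ud"
proof -
  let ?T = "toep_mat L (Xi_mat L m K) (Lambda_mat L m r K) (Omega_mat L m)"
  let ?w = "stack L m ud - ?T *\<^sub>v stack L r yd"
  have T: "?T \<in> carrier_mat (L * m) (L * r)"
    by (rule toep_mat_carrier[OF Lambda_mat_carrier Omega_mat_carrier])
  have w: "?w \<in> carrier_vec (L * m)" using T by auto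
  have "hcat (1\<^sub>m (L * m)) (- ?T) *\<^sub>v ioh L m r ud yd L = ?w"
  proof -
    have "ioh L m r ud yd L = stack L m ud @\<^sub>v stack L r yd" by (simp add: ioh_eq_stack)
    moreover have "- ?T *\<^sub>v stack L r yd = - (?T *\<^sub>v stack L r yd)"
      by (intro uminus_mult_mat_vec) simp
    ultimately show ?thesis
      using hcat_mult_append[OF one_carrier_mat uminus_carrier_mat[OF T] stack_carrier stack_carrier] T
      by (simp add: minus_add_uminus_vec[of _ "L * m"])
  qed
  then have \<xi>0_eq: "\<xi>0 = the (mat_inverse (obs_mat L (Omega_mat L m) (Xi_mat L m K))) *\<^sub>v ?w"
    using \<xi>0 by simp
  show "\<xi>0 \<in> carrier_vec (L * m)" unfolding \<xi>0_eq by (rule controller_obs_mat_inverse(1)[OF L w])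
  show "obs_mat L (Omega_mat L m) (Xi_mat L m K) *\<^sub>v \<xi>0 + ?T *\<^sub>v stack L r yd = stack L m ud"
    unfolding \<xi>0_eq controller_obs_mat_inverse(2)[OF L w] using T by (intro eq_vecI) auto
qed

section \<open>The two closed loops\<close>

lemma interconnection_reproduces_data:
  fixes x \<xi> u y xd ud yd :: "nat \<Rightarrow> real vec"
  assumes C: "C \<in> carrier_mat r n" and ud: "\<And>t. t < L \<Longrightarrow> ud t \<in> carrier_vec m"
    and xd_dyn: "\<And>t. t < L \<Longrightarrow> xd (Suc t) = A *\<^sub>v xd t + B *\<^sub>v ud t"
    and yd_out: "\<And>t. t < L \<Longrightarrow> yd t = C *\<^sub>v xd t"
    and x0: "x 0 = xd 0"
    and x_dyn: "\<And>t. x (Suc t) = A *\<^sub>v x t + B *\<^sub>v u t"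
    and y_out: "\<And>t. y t = C *\<^sub>v x t"
    and \<xi>_dyn: "\<And>t. \<xi> (Suc t) = Xi_mat L m K *\<^sub>v \<xi> t + Lambda_mat L m r K *\<^sub>v y t"
    and u_out: "\<And>t. u t = Omega_mat L m *\<^sub>v \<xi> t"
    and \<xi>0: "\<xi> 0 \<in> carrier_vec (L * m)"
    and init: "obs_mat L (Omega_mat L m) (Xi_mat L m K) *\<^sub>v \<xi> 0
                 + toep_mat L (Xi_mat L m K) (Lambda_mat L m r K) (Omega_mat L m) *\<^sub>v stack L r yd
               = stack L m ud"
  shows "ioh L m r u y L = ioh L m r ud yd L"
proof -
  let ?Xi = "Xi_mat L m K" and ?La = "Lambda_mat L m r K" and ?Om = "Omega_mat L m"
  \<comment> \<open>By the choice of \<xi> 0 the controller driven by the recorded outputs reproduces the recorded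
    inputs; by uniqueness of solutions the interconnection then follows the recorded trajectory.\<close>
  define \<xi>d where "\<xi>d = rec_nat (\<xi> 0) (\<lambda>s v. ?Xi *\<^sub>v v + ?La *\<^sub>v yd s)"
  have \<xi>d0: "\<xi>d 0 = \<xi> 0" and \<xi>d_Suc: "\<xi>d (Suc s) = ?Xi *\<^sub>v \<xi>d s + ?La *\<^sub>v yd s" for s
    by (simp_all add: \<xi>d_def)
  have yd: "yd s \<in> carrier_vec r" if "s < L" for s
    unfolding yd_out[OF that] using C by (intro carrier_vecI) simp
  have \<xi>d: "\<xi>d s \<in> carrier_vec (L * m)" if "s \<le> L" for s
    by (rule trajectory_carrier[where z = \<xi>d and w = yd, OF Xi_mat_carrier Lambda_mat_carrier])
      (use that yd \<xi>d_Suc \<xi>0 \<xi>d0 in auto)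
  have "stack L m (\<lambda>l. ?Om *\<^sub>v \<xi>d l)
      = obs_mat L ?Om ?Xi *\<^sub>v \<xi>d 0 + toep_mat L ?Xi ?La ?Om *\<^sub>v stack L r yd"
    by (rule trajectory_stack_outputs[where z = \<xi>d and w = yd, OF Xi_mat_carrier Lambda_mat_carrier Omega_mat_carrier])
      (use \<xi>d0 \<xi>0 yd \<xi>d_Suc in auto)
  also have "\<dots> = stack L m ud" using init \<xi>d0 by simp
  finally have ud_eq: "?Om *\<^sub>v \<xi>d s = ud s" if "s < L" for s
    using that ud mult_mat_vec_carrier[OF Omega_mat_carrier \<xi>d[of s]] by (elim stack_eqD) auto
  have agree: "\<xi> s = \<xi>d s \<and> x s = xd s" if "s \<le> L" for s
    using that
  proof (induction s)
    case (Suc s)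
    then have s: "s < L" and IH: "\<xi> s = \<xi>d s" "x s = xd s" by auto
    have "u s = ud s" using u_out IH ud_eq[OF s] by simp
    moreover have "y s = yd s" using y_out yd_out[OF s] IH by simp
    ultimately show ?case using \<xi>_dyn x_dyn xd_dyn[OF s] \<xi>d_Suc IH by simp
  qed (use \<xi>d0 x0 in simp)
  then have "u s = ud s" and "y s = yd s" if "s < L" for s
    using that u_out ud_eq y_out yd_out by auto
  then have "stack L m u = stack L m ud" and "stack L r y = stack L r yd"
    by (auto intro: stack_cong)
  then show ?thesis by (simp add: ioh_eq_stack)
qed

lemma interconnection_ioh_recursion:
  fixes x \<xi> u y :: "nat \<Rightarrow> real vec"
  assumes A: "A \<in> carrier_mat n n" and B: "B \<in> carrier_mat n m" and C: "C \<in> carrier_mat r n"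
    and rank: "rank_mat (obs_mat L C A) = n" and L: "0 < L" and K: "K \<in> carrier_mat m (L * (m + r))"
    and x0: "x 0 \<in> carrier_vec n"
    and x_dyn: "\<And>t. x (Suc t) = A *\<^sub>v x t + B *\<^sub>v u t"
    and y_out: "\<And>t. y t = C *\<^sub>v x t"
    and \<xi>_dyn: "\<And>t. \<xi> (Suc t) = Xi_mat L m K *\<^sub>v \<xi> t + Lambda_mat L m r K *\<^sub>v y t"
    and u_out: "\<And>t. u t = Omega_mat L m *\<^sub>v \<xi> t"
    and \<xi>0: "\<xi> 0 \<in> carrier_vec (L * m)"
    and t: "L \<le> t"
  shows "u t = K *\<^sub>v ioh L m r u y t"
    and "(C * Gamma_mat L A B C) *\<^sub>v ioh L m r u y t = y t"
    and "ioh L m r u y (Suc t) = Theta_mat L A B C *\<^sub>v ioh L m r u y t + Pi_mat L m r *\<^sub>v u t"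
proof -
  have y: "y s \<in> carrier_vec r" for s unfolding y_out using C by (intro carrier_vecI) simp
  have \<xi>: "\<xi> s \<in> carrier_vec (L * m)" for s
  proof (induction s)
    case (Suc s)
    show ?case unfolding \<xi>_dyn
      using mult_mat_vec_carrier[OF Xi_mat_carrier Suc] mult_mat_vec_carrier[OF Lambda_mat_carrier y] by simp
  qed (rule \<xi>0)
  have u: "u s \<in> carrier_vec m" for s
    unfolding u_out by (rule mult_mat_vec_carrier[OF Omega_mat_carrier \<xi>])
  have x: "x s \<in> carrier_vec n" for s
    by (induction s) (use x0 x_dyn u A B in auto)
  show "u t = K *\<^sub>v ioh L m r u y t"
    by (rule controller_realizes_arx[where \<xi> = \<xi> and u = u and y = y, OF L K \<xi> y \<xi>_dyn u_out t])
  have "Gamma_mat L A B C *\<^sub>v ioh L m r u y t = x t"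
    by (rule Gamma_mat_mult_ioh[where x = x and u = u and y = y, OF A B C rank x u x_dyn y_out t])
  moreover have "Gamma_mat L A B C \<in> carrier_mat n (L * m + L * r)"
    using pinv_full_column_rank(1)[OF obs_mat_carrier[OF C] rank] A B C by (intro Gamma_mat_carrier)
  ultimately show yG: "(C * Gamma_mat L A B C) *\<^sub>v ioh L m r u y t = y t"
    using C y_out by (simp add: ioh_def algebra_simps)
  show "ioh L m r u y (Suc t) = Theta_mat L A B C *\<^sub>v ioh L m r u y t + Pi_mat L m r *\<^sub>v u t"
    by (rule ioh_Suc_Theta_Pi[where u = u and y = y, OF A B C rank L t u y yG, symmetric])
qed

theorem lemma2:
  fixes A B C K :: "real mat" and n m r L :: nat
    and xd ud yd :: "nat \<Rightarrow> real vec"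
    and x \<xi> u y :: "nat \<Rightarrow> real vec"
    and vI uI yI :: "nat \<Rightarrow> real vec"
  assumes dims: "A \<in> carrier_mat n n" "B \<in> carrier_mat n m" "C \<in> carrier_mat r n"
    and minimal: "minimal_sys A B C"
    and stable: "schur A"
    and L_pos: "0 < L"
    and rankO: "rank_mat (obs_mat L C A) = n"
    and K_dim: "K \<in> carrier_mat m (L * (m + r))"
    \<comment> \<open>past data of \<Sigma>_s on [0, L), with arbitrary inputs, generating the IOH v(L)\<close>
    and xd0: "xd 0 \<in> carrier_vec n"
    and ud_dim: "\<And>t. t < L \<Longrightarrow> ud t \<in> carrier_vec m"
    and xd_dyn: "\<And>t. t < L \<Longrightarrow> xd (Suc t) = A *\<^sub>v xd t + B *\<^sub>v ud t"
    and yd_out: "\<And>t. t < L \<Longrightarrow> yd t = C *\<^sub>v xd t"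
    \<comment> \<open>feedback interconnection of \<Sigma>_s and K_s\<close>
    and x0: "x 0 = xd 0"
    and x_dyn: "\<And>t. x (Suc t) = A *\<^sub>v x t + B *\<^sub>v u t"
    and y_out: "\<And>t. y t = C *\<^sub>v x t"
    and \<xi>_dyn: "\<And>t. \<xi> (Suc t) = Xi_mat L m K *\<^sub>v \<xi> t + Lambda_mat L m r K *\<^sub>v y t"
    and u_out: "\<And>t. u t = Omega_mat L m *\<^sub>v \<xi> t"
    and \<xi>0: "\<xi> 0 = the (mat_inverse (obs_mat L (Omega_mat L m) (Xi_mat L m K)))
                   *\<^sub>v (hcat (1\<^sub>m (L * m))
                        (- toep_mat L (Xi_mat L m K) (Lambda_mat L m r K) (Omega_mat L m))
                      *\<^sub>v ioh L m r ud yd L)"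
    \<comment> \<open>closed loop of the IOH system with the IOH feedback u = K v\<close>
    and vI0: "vI L = ioh L m r ud yd L"
    and vI_dyn: "\<And>t. L \<le> t \<Longrightarrow> vI (Suc t) = Theta_mat L A B C *\<^sub>v vI t + Pi_mat L m r *\<^sub>v uI t"
    and yI_out: "\<And>t. L \<le> t \<Longrightarrow> yI t = (C * Gamma_mat L A B C) *\<^sub>v vI t"
    and uI_fb: "\<And>t. L \<le> t \<Longrightarrow> uI t = K *\<^sub>v vI t"
  shows "\<forall>t \<ge> L. uI t = u t \<and> yI t = y t"
proof -
  note init = controller_initial_state[OF L_pos \<xi>0]
  have x0_carrier: "x 0 \<in> carrier_vec n" using x0 xd0 by simp
  note closed_loop = interconnection_ioh_recursion[OF dims rankO L_pos K_dim x0_carrier x_dyn y_out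
      \<xi>_dyn u_out init(1)]
  have vI: "vI t = ioh L m r u y t" if "L \<le> t" for t
    using that
  proof (induction t rule: dec_induct)
    case base
    show ?case using interconnection_reproduces_data[OF dims(3) ud_dim xd_dyn yd_out x0 x_dyn y_out
        \<xi>_dyn u_out init] vI0 by simp
  next
    case (step t)
    have "uI t = u t" using uI_fb[OF step.hyps(1)] step.IH closed_loop(1)[OF step.hyps(1)] by simp
    then show ?case using vI_dyn[OF step.hyps(1)] step.IH closed_loop(3)[OF step.hyps(1)] by simp
  qed
  show ?thesis
  proof (intro allI impI conjI)
    fix t assume t: "L \<le> t"
    show "uI t = u t" using uI_fb[OF t] vI[OF t] closed_loop(1)[OF t] by simp
    show "yI t = y t" using yI_out[OF t] vI[OF t] closed_loop(2)[OF t] by simp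
  qed
qed

end
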